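(* Let $x\in\beta\mathbb{N}$ and $n\in\mathbb{N}$. Then there exists $\alpha\in\mathcal{A}$ with $\sigma(\alpha)=n$ and $F_\alpha\subseteq x$ if and only if $x\in\overline{L_n}$.
   Context: $\mathbb{N}=\{1,2,3,\dots\}$; $\beta\mathbb{N}$ is the Stone–Čech compactification of discrete $\mathbb{N}$, identified with the set of ultrafilters on $\mathbb{N}$ (natural numbers identified with principal ultrafilters). For $A\subseteq\mathbb{N}$, $\overline{A}=\{x\in\beta\mathbb{N}: A\in x\}$. $P$ is the set of prime numbers, $L_0=\{1\}$ and for $n\ge1$, $L_n=\{a_1a_2\cdots a_n: a_1,\dots,a_n\in P\}$ (products of exactly $n$ primes, counted with multiplicity). For $p\in\overline{P}$ and $k\in\mathbb{N}$, $p^k$ denotes the ultrafilter generated by the sets $A^k=\{a^k:a\in A\}$, $A\in p$; such ultrafilters are called basic, and $\mathcal{B}$ is the set of basic ultrafilters. $\mathcal{A}$ is the set of functions $\alpha:\mathcal{B}\to\mathbb{N}\cup\{0\}$ with finite support, written $\alpha=\{(p_1^{k_1},n_1),\dots,(p_m^{k_m},n_m)\}$ with $p_i\in\overline{P}$, the $p_i^{k_i}$ distinct and $n_i\ge1$ (and $\alpha(b)=0$ elsewhere). For such $\alpha$, $\sigma(\alpha)=\sum_{i=1}^m k_in_i$, and $F_\alpha$ is the family of all sets $(A_1^{k_1})^{(n_1)}(A_2^{k_2})^{(n_2)}\cdots(A_m^{k_m})^{(n_m)}=\{\prod_{i=1}^m\prod_{j=1}^{n_i}a_{i,j}^{k_i}: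 a_{i,j}\in A_i \text{ for all } i,j,\ \text{the } a_{i,j} \text{ pairwise distinct}\}$, where $A_i\in p_i$, $A_i\subseteq P$, $A_i=A_j$ if $p_i=p_j$, and $A_i\cap A_j=\emptyset$ otherwise. *)

theory Defs
  imports "HOL-Computational_Algebra.Primes"
begin

definition Npos :: "nat set" where
  "Npos = {n. n \<ge> 1}"

text \<open>Ultrafilters on \<open>\<nat>\<close> (points of \<open>\<beta>\<nat>\<close>), as families of subsets of \<open>Npos\<close>.\<close>
definition is_ultrafilter :: "nat set set \<Rightarrow> bool" where
  "is_ultrafilter U \<longleftrightarrow>
     U \<subseteq> Pow Npos \<and> Npos \<in> U \<and> {} \<notin> U \<and>
     (\<forall>A B. A \<in> U \<and> B \<in> U \<longrightarrow> A \<inter> B \<in> U) \<and>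
     (\<forall>A B. A \<in> U \<and> A \<subseteq> B \<and> B \<subseteq> Npos \<longrightarrow> B \<in> U) \<and>
     (\<forall>A. A \<subseteq> Npos \<longrightarrow> A \<in> U \<or> Npos - A \<in> U)"

definition bar :: "nat set \<Rightarrow> nat set set set" where
  "bar A = {x. is_ultrafilter x \<and> A \<in> x}"

definition Primes :: "nat set" where
  "Primes = {p. prime p}"

definition L :: "nat \<Rightarrow> nat set" where
  "L n = {prod_list xs | xs. length xs = n \<and> set xs \<subseteq> Primes}"

definition upow :: "nat set set \<Rightarrow> nat \<Rightarrow> nat set set" where
  "upow p k = {B. B \<subseteq> Npos \<and> (\<exists>A\<in>p. (\<lambda>a. a ^ k) ` A \<subseteq> B)}"

text \<open>An element \<open>\<alpha> = {(p_1^{k_1},n_1),...,(p_m^{k_m},n_m)}\<close> of \<open>\<A>\<close>, represented as the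
  list of triples \<open>(p_i, k_i, n_i)\<close> with \<open>p_i \<in> \<overline>P\<close>, \<open>k_i, n_i \<ge> 1\<close> and the
  basic ultrafilters \<open>p_i^{k_i}\<close> pairwise distinct.\<close>
type_synonym alpha = "(nat set set \<times> nat \<times> nat) list"

definition valid_alpha :: "alpha \<Rightarrow> bool" where
  "valid_alpha al \<longleftrightarrow>
     (\<forall>(p, k, n) \<in> set al. p \<in> bar Primes \<and> k \<ge> 1 \<and> n \<ge> 1) \<and>
     distinct (map (\<lambda>(p, k, n). upow p k) al)"

definition sigma :: "alpha \<Rightarrow> nat" where
  "sigma al = (\<Sum>i<length al. fst (snd (al ! i)) * snd (snd (al ! i)))"

definition F_alpha :: "alpha \<Rightarrow> nat set set" where
  "F_alpha al =
     {S. \<exists>A :: nat \<Rightarrow> nat set.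
        (\<forall>i<length al. A i \<in> fst (al ! i) \<and> A i \<subseteq> Primes) \<and>
        (\<forall>i<length al. \<forall>j<length al.
            (fst (al ! i) = fst (al ! j) \<longrightarrow> A i = A j) \<and>
            (fst (al ! i) \<noteq> fst (al ! j) \<longrightarrow> A i \<inter> A j = {})) \<and>
        S = {(\<Prod>i<length al. \<Prod>j<snd (snd (al ! i)). a i j ^ fst (snd (al ! i))) | a.
               (\<forall>i<length al. \<forall>j<snd (snd (al ! i)). a i j \<in> A i) \<and>
               inj_on (\<lambda>(i, j). a i j) {(i, j). i < length al \<and> j < snd (snd (al ! i))}}}"

end

(*
  Let Omega(a) count the prime factors of a with multiplicity, so that L_n = {a. Omega(a) = n}.

  If F_alpha is contained in x, choose pairwise disjoint sets of primes A_i in p_i (distinct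
  ultrafilters are separated by disjoint sets); the resulting member of F_alpha lies in x and
  consists of numbers a with Omega(a) = sigma(alpha), so L_n is in x.

  Conversely, let L_n be in x. Sorting the prime factors of a in increasing order gives its
  exponent list, which takes only finitely many values on L_n, so one class T of numbers with
  the same exponent list (s_1, ..., s_m) belongs to x. Let c_j(a) be the j-th prime factor of
  a in T and p_j the image of x under c_j, an ultrafilter on the primes. Collecting the pairs
  (p_j, s_j) with multiplicities gives alpha with sigma(alpha) = s_1 + ... + s_m = n, and every
  member of F_alpha contains the set of those a in T whose prime factors c_j(a) lie in given
  sets B_j in p_j, a finite intersection of members of x.
*)

theory Submission
  imports Defs "HOL-Library.Disjoint_Sets"
begin

section \<open>Counting prime factors\<close>

definition bigomega :: "nat \<Rightarrow> nat" where
  "bigomega a = size (prime_factorization a)"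

lemma bigomega_prime_power: "prime p \<Longrightarrow> bigomega (p ^ k) = k"
  by (simp add: bigomega_def prime_factorization_prime_power)

lemma bigomega_prod:
  assumes "finite I" "\<And>i. i \<in> I \<Longrightarrow> f i \<noteq> (0::nat)"
  shows "bigomega (\<Prod>i\<in>I. f i) = (\<Sum>i\<in>I. bigomega (f i))"
  using assms by (simp add: bigomega_def prime_factorization_prod)

lemma L_eq_bigomega: "L n = {a. a \<noteq> 0 \<and> bigomega a = n}"
proof (intro set_eqI iffI)
  fix a assume "a \<in> L n"
  then obtain xs where xs: "a = prod_list xs" "length xs = n" "set xs \<subseteq> Primes"
    by (auto simp: L_def)
  have "prime_factorization (prod_mset (mset xs)) = mset xs"
    by (rule prime_factorization_prod_mset_primes) (use xs in \<open>auto simp: Primes_def\<close>)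
  then have "prime_factorization a = mset xs"
    using xs(1) by (simp add: prod_mset_prod_list)
  moreover have "a \<noteq> 0"
    using xs by (auto simp: prod_list_zero_iff Primes_def)
  ultimately show "a \<in> {a. a \<noteq> 0 \<and> bigomega a = n}"
    using xs by (simp add: bigomega_def)
next
  fix a assume "a \<in> {a. a \<noteq> 0 \<and> bigomega a = n}"
  then have a: "a \<noteq> 0" "bigomega a = n" by auto
  obtain xs where xs: "mset xs = prime_factorization a"
    using ex_mset by blast
  have "prod_list xs = a"
    using xs a by (simp add: prod_mset_prod_list [symmetric])
  moreover have "set xs \<subseteq> Primes"
    using xs by (auto simp: Primes_def simp flip: set_mset_mset)
  moreover have "length xs = n"
    using xs a by (simp add: bigomega_def flip: size_mset)
  ultimately show "a \<in> L n" by (auto simp: L_def)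
qed

lemma L_subset_Npos: "L n \<subseteq> Npos"
  by (auto simp: L_eq_bigomega Npos_def)

lemma Primes_subset_Npos: "Primes \<subseteq> Npos"
  by (auto simp: Primes_def Npos_def Suc_le_eq prime_gt_0_nat)

definition prime_factor_list :: "nat \<Rightarrow> nat list" where
  "prime_factor_list a = sorted_list_of_set (prime_factors a)"

definition exponent_list :: "nat \<Rightarrow> nat list" where
  "exponent_list a = map (\<lambda>q. multiplicity q a) (prime_factor_list a)"

lemma distinct_prime_factor_list: "distinct (prime_factor_list a)"
  by (simp add: prime_factor_list_def)

lemma set_prime_factor_list: "set (prime_factor_list a) = prime_factors a"
  by (simp add: prime_factor_list_def)

lemma length_exponent_list: "length (exponent_list a) = length (prime_factor_list a)"
  by (simp add: exponent_list_def)

lemma prime_factor_list_prime: "j < length (prime_factor_list a) \<Longrightarrow> prime (prime_factor_list a ! j)"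
  using nth_mem set_prime_factor_list by (metis in_prime_factors_imp_prime)

lemma exponent_list_pos: "e \<in> set (exponent_list a) \<Longrightarrow> e \<ge> 1"
  by (auto simp: exponent_list_def set_prime_factor_list prime_factors_multiplicity Suc_le_eq)

lemma prod_prime_factor_list:
  assumes "a \<noteq> 0"
  shows "(\<Prod>j<length (prime_factor_list a). prime_factor_list a ! j ^ (exponent_list a ! j)) = a"
proof -
  have "(\<Prod>j<length (prime_factor_list a). prime_factor_list a ! j ^ (exponent_list a ! j))
      = (\<Prod>j<length (prime_factor_list a). (\<lambda>q. q ^ multiplicity q a) (prime_factor_list a ! j))"
    by (simp add: exponent_list_def)
  also have "\<dots> = (\<Prod>q\<in>prime_factors a. q ^ multiplicity q a)"
    using prod.reindex_bij_betw
        [OF bij_betw_nth [OF distinct_prime_factor_list refl set_prime_factor_list [symmetric]]]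
    by simp
  also have "\<dots> = a"
    using prod_prime_factors [OF assms] by simp
  finally show ?thesis .
qed

lemma sum_list_exponent_list:
  assumes "a \<noteq> 0"
  shows "sum_list (exponent_list a) = bigomega a"
proof -
  have "sum_list (exponent_list a) = (\<Sum>q\<in>prime_factors a. multiplicity q a)"
    by (simp add: exponent_list_def sum_list_distinct_conv_sum_set distinct_prime_factor_list
        set_prime_factor_list)
  also have "\<dots> = (\<Sum>q\<in>prime_factors a. bigomega (q ^ multiplicity q a))"
    by (intro sum.cong refl) (simp add: bigomega_prime_power in_prime_factors_imp_prime)
  also have "\<dots> = bigomega (\<Prod>q\<in>prime_factors a. q ^ multiplicity q a)"
    by (rule bigomega_prod [symmetric]) (auto simp: in_prime_factors_iff)
  also have "\<dots> = bigomega a"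
    using prod_prime_factors [OF assms] by simp
  finally show ?thesis .
qed

lemma finite_exponent_lists: "finite (exponent_list ` L n)"
proof (rule finite_subset)
  show "exponent_list ` L n \<subseteq> {es. set es \<subseteq> {..n} \<and> length es \<le> n}"
  proof clarify
    fix a assume "a \<in> L n"
    then have sum: "sum_list (exponent_list a) = n"
      by (simp add: L_eq_bigomega sum_list_exponent_list)
    have "length (exponent_list a) \<le> sum_list (exponent_list a)"
      using exponent_list_pos sum_list_mono [of "exponent_list a" "\<lambda>_. 1" id] by (simp add: sum_list_triv)
    moreover have "set (exponent_list a) \<subseteq> {..sum_list (exponent_list a)}"
      by (auto intro: member_le_sum_list)
    ultimately show "set (exponent_list a) \<subseteq> {..n} \<and> length (exponent_list a) \<le> n"
      using sum by simp
  qed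
  show "finite {es. set es \<subseteq> {..n} \<and> length es \<le> n}"
    by (rule finite_lists_length_le) simp
qed

section \<open>Ultrafilters on the positive integers\<close>

lemma ultrafilter_subset_Npos: "is_ultrafilter U \<Longrightarrow> B \<in> U \<Longrightarrow> B \<subseteq> Npos"
  by (auto simp: is_ultrafilter_def)

lemma ultrafilter_Npos: "is_ultrafilter U \<Longrightarrow> Npos \<in> U"
  by (simp add: is_ultrafilter_def)

lemma ultrafilter_nonempty: "is_ultrafilter U \<Longrightarrow> A \<in> U \<Longrightarrow> A \<noteq> {}"
  by (auto simp: is_ultrafilter_def)

lemma ultrafilter_Int: "is_ultrafilter U \<Longrightarrow> A \<in> U \<Longrightarrow> B \<in> U \<Longrightarrow> A \<inter> B \<in> U"
  by (simp add: is_ultrafilter_def)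

lemma ultrafilter_mono: "is_ultrafilter U \<Longrightarrow> A \<in> U \<Longrightarrow> A \<subseteq> B \<Longrightarrow> B \<subseteq> Npos \<Longrightarrow> B \<in> U"
  unfolding is_ultrafilter_def by blast

lemma ultrafilter_compl: "is_ultrafilter U \<Longrightarrow> A \<subseteq> Npos \<Longrightarrow> A \<notin> U \<Longrightarrow> Npos - A \<in> U"
  unfolding is_ultrafilter_def by blast

lemma ultrafilter_finite_Inter:
  assumes U: "is_ultrafilter U" and "finite I" and "\<And>i. i \<in> I \<Longrightarrow> B i \<in> U"
  shows "Npos \<inter> (\<Inter>i\<in>I. B i) \<in> U"
  using assms(2,3)
proof (induction I rule: finite_induct)
  case empty
  show ?case using ultrafilter_Npos [OF U] by simp
next
  case (insert i I)
  then have "B i \<inter> (Npos \<inter> (\<Inter>i\<in>I. B i)) \<in> U"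
    by (simp add: ultrafilter_Int [OF U])
  moreover have "B i \<inter> (Npos \<inter> (\<Inter>i\<in>I. B i)) = Npos \<inter> (\<Inter>i\<in>insert i I. B i)"
    by blast
  ultimately show ?case by simp
qed

lemma ultrafilter_finite_fiber:
  assumes U: "is_ultrafilter U" and Y: "Y \<in> U" and fin: "finite (f ` Y)"
  shows "\<exists>v. {y \<in> Y. f y = v} \<in> U"
proof (rule ccontr)
  assume no_fiber: "\<nexists>v. {y \<in> Y. f y = v} \<in> U"
  have "Npos - {y \<in> Y. f y = v} \<in> U" for v
  proof (rule ultrafilter_compl [OF U])
    show "{y \<in> Y. f y = v} \<subseteq> Npos"
      using ultrafilter_subset_Npos [OF U Y] by blast
  qed (use no_fiber in blast)
  then have "Y \<inter> (Npos \<inter> (\<Inter>v\<in>f ` Y. Npos - {y \<in> Y. f y = v})) \<in> U"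
    by (intro ultrafilter_Int [OF U Y] ultrafilter_finite_Inter [OF U fin])
  moreover have "Y \<inter> (Npos \<inter> (\<Inter>v\<in>f ` Y. Npos - {y \<in> Y. f y = v})) = {}"
    by blast
  ultimately show False
    using ultrafilter_nonempty [OF U] by blast
qed

lemma ultrafilter_eqI:
  assumes U: "is_ultrafilter U" and V: "is_ultrafilter V" and "U \<subseteq> V"
  shows "U = V"
proof (rule ccontr)
  assume "U \<noteq> V"
  with \<open>U \<subseteq> V\<close> obtain B where B: "B \<in> V" "B \<notin> U" by blast
  have "Npos - B \<in> U"
    using ultrafilter_compl [OF U ultrafilter_subset_Npos [OF V B(1)] B(2)] .
  then have "B \<inter> (Npos - B) \<in> V"
    using \<open>U \<subseteq> V\<close> B(1) ultrafilter_Int [OF V] by blast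
  then show False
    using ultrafilter_nonempty [OF V] by blast
qed

lemma ultrafilter_separate:
  assumes U: "is_ultrafilter U" and V: "is_ultrafilter V" and "U \<noteq> V"
  obtains B where "B \<in> U" "Npos - B \<in> V"
proof -
  obtain B where "B \<in> U" "B \<notin> V"
    using ultrafilter_eqI [OF U V] \<open>U \<noteq> V\<close> by blast
  then show thesis
    using that ultrafilter_compl [OF V] ultrafilter_subset_Npos [OF U] by blast
qed

lemma ultrafilters_disjoint_representatives:
  assumes "finite P" and uf: "\<And>p. p \<in> P \<Longrightarrow> is_ultrafilter p"
  obtains R where "\<And>p. p \<in> P \<Longrightarrow> R p \<in> p"
    and "\<And>p q. p \<in> P \<Longrightarrow> q \<in> P \<Longrightarrow> p \<noteq> q \<Longrightarrow> R p \<inter> R q = {}"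
proof -
  have "\<exists>B. B \<in> p \<and> Npos - B \<in> q" if "p \<in> P" "q \<in> P" "p \<noteq> q" for p q
    using ultrafilter_separate [OF uf uf] that by metis
  then obtain B
    where B: "\<And>p q. p \<in> P \<Longrightarrow> q \<in> P \<Longrightarrow> p \<noteq> q \<Longrightarrow> B p q \<in> p \<and> Npos - B p q \<in> q"
    by metis
  define R where "R p = Npos \<inter> (\<Inter>q\<in>P - {p}. B p q \<inter> (Npos - B q p))" for p
  show thesis
  proof
    fix p assume p: "p \<in> P"
    have "B p q \<inter> (Npos - B q p) \<in> p" if "q \<in> P - {p}" for q
      using B [of p q] B [of q p] that p ultrafilter_Int uf by auto
    then show "R p \<in> p"
      unfolding R_def by (intro ultrafilter_finite_Inter uf p) (use \<open>finite P\<close> in auto)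
  next
    fix p q assume "p \<in> P" "q \<in> P" "p \<noteq> q"
    then have "R p \<subseteq> B p q" "R q \<subseteq> Npos - B p q"
      by (auto simp: R_def)
    then show "R p \<inter> R q = {}" by blast
  qed
qed

text \<open>The image \<open>\<beta>f(x)\<close> of \<open>x\<close>, for \<open>f\<close> defined on some \<open>T \<in> x\<close>.\<close>

definition pushforward :: "(nat \<Rightarrow> nat) \<Rightarrow> nat set \<Rightarrow> nat set set \<Rightarrow> nat set set" where
  "pushforward f T x = {B. B \<subseteq> Npos \<and> {a \<in> T. f a \<in> B} \<in> x}"

lemma mem_pushforward_iff:
  "B \<in> pushforward f T x \<longleftrightarrow> B \<subseteq> Npos \<and> {a \<in> T. f a \<in> B} \<in> x"
  by (simp add: pushforward_def)

lemma is_ultrafilter_pushforward: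
  assumes x: "is_ultrafilter x" and T: "T \<in> x" and f: "f ` T \<subseteq> Npos"
  shows "is_ultrafilter (pushforward f T x)"
  unfolding is_ultrafilter_def
proof (intro conjI allI impI)
  show "pushforward f T x \<subseteq> Pow Npos"
    by (auto simp: pushforward_def)
  have "{a \<in> T. f a \<in> Npos} = T"
    using f by blast
  then show "Npos \<in> pushforward f T x"
    using T by (simp add: mem_pushforward_iff)
  show "{} \<notin> pushforward f T x"
    using ultrafilter_nonempty [OF x] by (auto simp: mem_pushforward_iff)
next
  fix B C
  assume "B \<in> pushforward f T x \<and> C \<in> pushforward f T x"
  then have "B \<inter> C \<subseteq> Npos" "{a \<in> T. f a \<in> B} \<inter> {a \<in> T. f a \<in> C} \<in> x"
    using ultrafilter_Int [OF x] by (auto simp: mem_pushforward_iff)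
  moreover have "{a \<in> T. f a \<in> B} \<inter> {a \<in> T. f a \<in> C} = {a \<in> T. f a \<in> B \<inter> C}"
    by blast
  ultimately show "B \<inter> C \<in> pushforward f T x"
    by (simp add: mem_pushforward_iff)
next
  fix B C
  assume "B \<in> pushforward f T x \<and> B \<subseteq> C \<and> C \<subseteq> Npos"
  then have "{a \<in> T. f a \<in> B} \<in> x" "{a \<in> T. f a \<in> B} \<subseteq> {a \<in> T. f a \<in> C}" "C \<subseteq> Npos"
    by (auto simp: mem_pushforward_iff)
  moreover have "{a \<in> T. f a \<in> C} \<subseteq> Npos"
    using ultrafilter_subset_Npos [OF x T] by blast
  ultimately show "C \<in> pushforward f T x"
    using ultrafilter_mono [OF x] by (simp add: mem_pushforward_iff)
next
  fix B
  assume B: "B \<subseteq> Npos"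
  show "B \<in> pushforward f T x \<or> Npos - B \<in> pushforward f T x"
  proof (cases "{a \<in> T. f a \<in> B} \<in> x")
    case False
    have "T \<subseteq> Npos"
      using ultrafilter_subset_Npos [OF x T] .
    then have "T \<inter> (Npos - {a \<in> T. f a \<in> B}) \<in> x"
      using ultrafilter_compl [OF x _ False] ultrafilter_Int [OF x T] by blast
    moreover have "T \<inter> (Npos - {a \<in> T. f a \<in> B}) = {a \<in> T. f a \<in> Npos - B}"
      using \<open>T \<subseteq> Npos\<close> f by blast
    ultimately show ?thesis
      by (simp add: mem_pushforward_iff)
  qed (simp add: B mem_pushforward_iff)
qed

lemma pushforward_in_bar:
  assumes x: "is_ultrafilter x" and T: "T \<in> x" and f: "f ` T \<subseteq> A" and A: "A \<subseteq> Npos"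
  shows "pushforward f T x \<in> bar A"
proof -
  have "{a \<in> T. f a \<in> A} = T"
    using f by blast
  then show ?thesis
    using is_ultrafilter_pushforward [OF x T] f A T by (auto simp: bar_def mem_pushforward_iff)
qed

lemma pow_image_mem_upow_iff:
  assumes p: "is_ultrafilter p" and A: "A \<subseteq> Npos" and k: "k \<ge> 1"
  shows "(\<lambda>a. a ^ k) ` A \<in> upow p k \<longleftrightarrow> A \<in> p"
proof
  assume "(\<lambda>a. a ^ k) ` A \<in> upow p k"
  then obtain A' where A': "A' \<in> p" "(\<lambda>a. a ^ k) ` A' \<subseteq> (\<lambda>a. a ^ k) ` A"
    by (auto simp: upow_def)
  have "inj (\<lambda>a::nat. a ^ k)"
    using k by (auto intro: injI simp: power_eq_iff_eq_base)
  with A'(2) have "A' \<subseteq> A"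
    by (simp add: inj_image_subset_iff)
  then show "A \<in> p"
    using ultrafilter_mono [OF p A'(1) _ A] by blast
next
  assume "A \<in> p"
  moreover have "(\<lambda>a. a ^ k) ` A \<subseteq> Npos"
    using A by (auto simp: Npos_def)
  ultimately show "(\<lambda>a. a ^ k) ` A \<in> upow p k"
    by (auto simp: upow_def)
qed

lemma upow_inj:
  assumes p: "p \<in> bar Primes" and p': "p' \<in> bar Primes" and k: "k \<ge> 1" and k': "k' \<ge> 1"
    and eq: "upow p k = upow p' k'"
  shows "p = p' \<and> k = k'"
proof -
  have uf: "is_ultrafilter p" "is_ultrafilter p'" and Pr: "Primes \<in> p" "Primes \<in> p'"
    using p p' by (auto simp: bar_def)
  have "(\<lambda>a. a ^ k) ` Primes \<in> upow p' k'"
    using pow_image_mem_upow_iff [OF uf(1) Primes_subset_Npos k] Pr(1) eq by simp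
  then obtain A' where A': "A' \<in> p'" "(\<lambda>a. a ^ k') ` A' \<subseteq> (\<lambda>a. a ^ k) ` Primes"
    by (auto simp: upow_def)
  obtain q where "q \<in> A'" "q \<in> Primes"
    using ultrafilter_Int [OF uf(2) A'(1) Pr(2)] ultrafilter_nonempty [OF uf(2)] by blast
  with A'(2) obtain r where "prime q" "prime r" "q ^ k' = r ^ k"
    by (auto simp: Primes_def)
  then have kk: "k' = k"
    by (metis bigomega_prime_power)
  have "p \<subseteq> p'"
  proof
    fix B assume "B \<in> p"
    moreover have B: "B \<subseteq> Npos"
      using ultrafilter_subset_Npos [OF uf(1) \<open>B \<in> p\<close>] .
    ultimately have "(\<lambda>a. a ^ k) ` B \<in> upow p' k"
      using pow_image_mem_upow_iff [OF uf(1) B k] eq kk by simp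
    then show "B \<in> p'"
      using pow_image_mem_upow_iff [OF uf(2) B k] by simp
  qed
  then show ?thesis
    using ultrafilter_eqI [OF uf] kk by simp
qed

section \<open>The families F_alpha\<close>

definition alpha_products :: "alpha \<Rightarrow> (nat \<Rightarrow> nat set) \<Rightarrow> nat set" where
  "alpha_products al A =
     {(\<Prod>i<length al. \<Prod>j<snd (snd (al ! i)). a i j ^ fst (snd (al ! i))) | a.
        (\<forall>i<length al. \<forall>j<snd (snd (al ! i)). a i j \<in> A i) \<and>
        inj_on (\<lambda>(i, j). a i j) {(i, j). i < length al \<and> j < snd (snd (al ! i))}}"

definition admissible :: "alpha \<Rightarrow> (nat \<Rightarrow> nat set) \<Rightarrow> bool" where
  "admissible al A \<longleftrightarrow>
     (\<forall>i<length al. A i \<in> fst (al ! i) \<and> A i \<subseteq> Primes) \<and>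
     (\<forall>i<length al. \<forall>j<length al.
        (fst (al ! i) = fst (al ! j) \<longrightarrow> A i = A j) \<and>
        (fst (al ! i) \<noteq> fst (al ! j) \<longrightarrow> A i \<inter> A j = {}))"

lemma F_alpha_eq: "F_alpha al = {alpha_products al A | A. admissible al A}"
  unfolding F_alpha_def alpha_products_def admissible_def by blast

lemma alpha_products_memI:
  assumes "\<forall>i<length al. \<forall>j<snd (snd (al ! i)). a i j \<in> A i"
    and "inj_on (\<lambda>(i, j). a i j) {(i, j). i < length al \<and> j < snd (snd (al ! i))}"
  shows "(\<Prod>i<length al. \<Prod>j<snd (snd (al ! i)). a i j ^ fst (snd (al ! i))) \<in> alpha_products al A"
  using assms unfolding alpha_products_def by blast

lemma alpha_products_subset_L:
  assumes A: "\<And>i. i < length al \<Longrightarrow> A i \<subseteq> Primes"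
  shows "alpha_products al A \<subseteq> L (sigma al)"
proof
  fix y assume "y \<in> alpha_products al A"
  then obtain a where a: "\<forall>i<length al. \<forall>j<snd (snd (al ! i)). a i j \<in> A i"
    and y: "y = (\<Prod>i<length al. \<Prod>j<snd (snd (al ! i)). a i j ^ fst (snd (al ! i)))"
    unfolding alpha_products_def by blast
  have prime: "prime (a i j)" if "i < length al" "j < snd (snd (al ! i))" for i j
    using A [OF that(1)] a that by (auto simp: Primes_def)
  then have nonzero: "a i j \<noteq> 0" if "i < length al" "j < snd (snd (al ! i))" for i j
    using that by (simp add: prime_gt_0_nat)
  then have "y \<noteq> 0"
    unfolding y by simp
  have "bigomega y = (\<Sum>i<length al. bigomega (\<Prod>j<snd (snd (al ! i)). a i j ^ fst (snd (al ! i))))"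
    unfolding y by (rule bigomega_prod) (use nonzero in auto)
  also have "\<dots> = (\<Sum>i<length al. \<Sum>j<snd (snd (al ! i)). bigomega (a i j ^ fst (snd (al ! i))))"
    by (intro sum.cong refl bigomega_prod) (use nonzero in auto)
  also have "\<dots> = sigma al"
    using prime by (simp add: bigomega_prime_power sigma_def mult.commute)
  finally show "y \<in> L (sigma al)"
    using \<open>y \<noteq> 0\<close> by (simp add: L_eq_bigomega)
qed

lemma admissibleD:
  assumes "admissible al A" and "i < length al"
  shows "A i \<in> fst (al ! i)" and "A i \<subseteq> Primes"
  using assms unfolding admissible_def by blast+

lemma F_alpha_subset_L:
  assumes "S \<in> F_alpha al"
  shows "S \<subseteq> L (sigma al)"
proof -
  from assms obtain A where "admissible al A" "S = alpha_products al A"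
    unfolding F_alpha_eq by blast
  then show ?thesis
    using alpha_products_subset_L admissibleD(2) by blast
qed

lemma valid_alpha_nth:
  assumes "valid_alpha al" and "i < length al"
  shows "fst (al ! i) \<in> bar Primes \<and> fst (snd (al ! i)) \<ge> 1 \<and> snd (snd (al ! i)) \<ge> 1"
proof -
  obtain p k n where e: "al ! i = (p, k, n)"
    by (cases "al ! i") auto
  then have "(p, k, n) \<in> set al"
    using nth_mem [OF assms(2)] by simp
  then show ?thesis
    using assms(1) e unfolding valid_alpha_def by fastforce
qed

lemma admissible_exists:
  assumes "valid_alpha al"
  shows "\<exists>A. admissible al A"
proof -
  have "is_ultrafilter p" if "p \<in> fst ` set al" for p
    using assms that by (auto simp: valid_alpha_def bar_def)
  then obtain R where R: "\<And>p. p \<in> fst ` set al \<Longrightarrow> R p \<in> p"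
    "\<And>p q. p \<in> fst ` set al \<Longrightarrow> q \<in> fst ` set al \<Longrightarrow> p \<noteq> q \<Longrightarrow> R p \<inter> R q = {}"
    using ultrafilters_disjoint_representatives [of "fst ` set al"] by blast
  define A where "A i = Primes \<inter> R (fst (al ! i))" for i
  have "A i \<in> fst (al ! i) \<and> A i \<subseteq> Primes" if "i < length al" for i
    using valid_alpha_nth [OF assms that] R(1) [of "fst (al ! i)"] that
    by (auto simp: A_def bar_def intro: ultrafilter_Int)
  moreover have "A i \<inter> A j = {}" if "i < length al" "j < length al" "fst (al ! i) \<noteq> fst (al ! j)" for i j
    using R(2) [of "fst (al ! i)" "fst (al ! j)"] that by (auto simp: A_def)
  moreover have "A i = A j" if "fst (al ! i) = fst (al ! j)" for i j
    using that by (simp add: A_def)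
  ultimately have "admissible al A"
    unfolding admissible_def by blast
  then show ?thesis by blast
qed

lemma L_sigma_mem_if_F_alpha_subset:
  assumes x: "is_ultrafilter x" and "valid_alpha al" and "F_alpha al \<subseteq> x"
  shows "L (sigma al) \<in> x"
proof -
  obtain A where "admissible al A"
    using admissible_exists [OF \<open>valid_alpha al\<close>] ..
  then have "alpha_products al A \<in> F_alpha al"
    by (auto simp: F_alpha_eq)
  then have "alpha_products al A \<in> x" "alpha_products al A \<subseteq> L (sigma al)"
    using \<open>F_alpha al \<subseteq> x\<close> F_alpha_subset_L by auto
  then show ?thesis
    by (rule ultrafilter_mono [OF x _ _ L_subset_Npos])
qed

section \<open>Building alpha from a list of pairs (p, k)\<close>

lemma remdups_occurrences_bij:
  fixes xs :: "'a list"
  obtains g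
  where "bij_betw g (SIGMA i:{..<length (remdups xs)}. {..<count_list xs (remdups xs ! i)}) {..<length xs}"
    and "\<And>i l. i < length (remdups xs) \<Longrightarrow> l < count_list xs (remdups xs ! i) \<Longrightarrow>
           xs ! g (i, l) = remdups xs ! i"
proof -
  let ?r = "remdups xs"
  define J where "J i = {j. j < length xs \<and> xs ! j = ?r ! i}" for i
  define h where "h i = sorted_list_of_set (J i)" for i
  define g where "g = (\<lambda>(i, l). h i ! l)"
  have length_h: "length (h i) = count_list xs (?r ! i)" for i
    by (simp add: h_def J_def count_list_eq_length_filter length_filter_conv_card eq_commute)
  have h: "bij_betw ((!) (h i)) {..<length (h i)} (J i)" for i
    by (rule bij_betw_nth) (simp_all add: h_def J_def)
  have "g ` ({i} \<times> {..<length (h i)}) = J i" for i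
    using bij_betw_imp_surj_on [OF h] by (force simp: g_def)
  moreover have "inj_on g ({i} \<times> {..<length (h i)})" for i
    using bij_betw_imp_inj_on [OF h] by (auto simp: inj_on_def g_def)
  ultimately have g_fiber: "bij_betw g ({i} \<times> {..<count_list xs (?r ! i)}) (J i)" for i
    by (simp add: bij_betw_def length_h)
  have "disjoint_family_on J {..<length ?r}"
    by (auto simp: disjoint_family_on_def J_def nth_eq_iff_index_eq)
  then have "bij_betw g (\<Union>i<length ?r. {i} \<times> {..<count_list xs (?r ! i)}) (\<Union>i<length ?r. J i)"
    using g_fiber by (rule bij_betw_UNION_disjoint)
  moreover have "(\<Union>i<length ?r. J i) = {..<length xs}"
  proof -
    have "\<exists>i\<in>{..<length ?r}. xs ! j = ?r ! i" if "j < length xs" for j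
      using that by (metis in_set_conv_nth lessThan_iff nth_mem set_remdups)
    then show ?thesis
      by (auto simp: J_def)
  qed
  ultimately have "bij_betw g (SIGMA i:{..<length ?r}. {..<count_list xs (?r ! i)}) {..<length xs}"
    by (simp add: Sigma_def)
  moreover have "xs ! g (i, l) = ?r ! i" if "l < count_list xs (?r ! i)" for i l
    using bij_betwE [OF g_fiber] that by (simp add: J_def)
  ultimately show thesis
    using that by blast
qed

definition alpha_of :: "(nat set set \<times> nat) list \<Rightarrow> alpha" where
  "alpha_of xs = map (\<lambda>(p, k). (p, k, count_list xs (p, k))) (remdups xs)"

lemma length_alpha_of [simp]: "length (alpha_of xs) = length (remdups xs)"
  by (simp add: alpha_of_def)

lemma nth_alpha_of:
  "i < length (remdups xs) \<Longrightarrow>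
     alpha_of xs ! i = (fst (remdups xs ! i), snd (remdups xs ! i), count_list xs (remdups xs ! i))"
  by (simp add: alpha_of_def split: prod.split)

lemma valid_alpha_of:
  assumes xs: "\<And>p k. (p, k) \<in> set xs \<Longrightarrow> p \<in> bar Primes \<and> k \<ge> 1"
  shows "valid_alpha (alpha_of xs)"
proof -
  have "p \<in> bar Primes \<and> k \<ge> 1 \<and> n \<ge> 1" if "(p, k, n) \<in> set (alpha_of xs)" for p k n
  proof -
    from that have "(p, k) \<in> set xs" "n = count_list xs (p, k)"
      by (auto simp: alpha_of_def)
    then show ?thesis
      using xs [of p k] count_list_0_iff [of xs "(p, k)"] by linarith
  qed
  moreover have "inj_on (\<lambda>(p, k). upow p k) (set xs)"
  proof (rule inj_onI, clarify)
    fix p k p' k'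
    assume "(p, k) \<in> set xs" "(p', k') \<in> set xs" "upow p k = upow p' k'"
    then show "p = p' \<and> k = k'"
      using upow_inj [of p p' k k'] xs [of p k] xs [of p' k'] by blast
  qed
  moreover have "map (\<lambda>(p, k, n). upow p k) (alpha_of xs) = map (\<lambda>(p, k). upow p k) (remdups xs)"
    by (simp add: alpha_of_def split_def)
  ultimately show ?thesis
    unfolding valid_alpha_def by (auto simp: distinct_map)
qed

lemma sigma_eq_sum_list: "sigma al = (\<Sum>(p, k, n)\<leftarrow>al. k * n)"
  by (simp add: sigma_def sum_list_sum_nth atLeast0LessThan case_prod_beta)

lemma sigma_alpha_of: "sigma (alpha_of xs) = sum_list (map snd xs)"
proof -
  have "sigma (alpha_of xs) = (\<Sum>r\<leftarrow>remdups xs. snd r * count_list xs r)"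
    by (simp add: sigma_eq_sum_list alpha_of_def case_prod_beta comp_def)
  also have "\<dots> = (\<Sum>r\<in>set xs. count_list xs r * snd r)"
    by (simp add: sum_list_distinct_conv_sum_set mult.commute)
  also have "\<dots> = sum_list (map snd xs)"
    by (simp add: sum_list_map_eq_sum_count)
  finally show ?thesis .
qed

lemma alpha_products_alpha_of_memI:
  fixes xs :: "(nat set set \<times> nat) list"
  defines "I \<equiv> SIGMA i:{..<length (remdups xs)}. {..<count_list xs (remdups xs ! i)}"
  assumes g: "bij_betw g I {..<length xs}"
    and xs_g: "\<And>i l. i < length (remdups xs) \<Longrightarrow> l < count_list xs (remdups xs ! i) \<Longrightarrow>
                 xs ! g (i, l) = remdups xs ! i"
    and c_inj: "inj_on c {..<length xs}"
    and c_A: "\<And>i l. i < length (remdups xs) \<Longrightarrow> l < count_list xs (remdups xs ! i) \<Longrightarrow>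
                c (g (i, l)) \<in> A i"
  shows "(\<Prod>j<length xs. c j ^ snd (xs ! j)) \<in> alpha_products (alpha_of xs) A"
proof -
  let ?al = "alpha_of xs"
  define a where "a i l = c (g (i, l))" for i l
  have a_A: "\<forall>i<length ?al. \<forall>l<snd (snd (?al ! i)). a i l \<in> A i"
    using c_A by (simp add: a_def nth_alpha_of)
  have "inj_on (c \<circ> g) I"
    using comp_inj_on [OF bij_betw_imp_inj_on [OF g]] c_inj g by (simp add: bij_betw_def)
  moreover have "(\<lambda>(i, l). a i l) = c \<circ> g"
    by (simp add: a_def fun_eq_iff)
  moreover have "{(i, l). i < length ?al \<and> l < snd (snd (?al ! i))} = I"
    by (auto simp: I_def nth_alpha_of)
  ultimately have a_inj: "inj_on (\<lambda>(i, l). a i l) {(i, l). i < length ?al \<and> l < snd (snd (?al ! i))}"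
    by simp
  have "(\<Prod>i<length ?al. \<Prod>l<snd (snd (?al ! i)). a i l ^ fst (snd (?al ! i)))
      = (\<Prod>i<length (remdups xs). \<Prod>l<count_list xs (remdups xs ! i). c (g (i, l)) ^ snd (xs ! g (i, l)))"
    by (intro prod.cong) (simp_all add: nth_alpha_of a_def xs_g)
  also have "\<dots> = (\<Prod>(i, l)\<in>I. c (g (i, l)) ^ snd (xs ! g (i, l)))"
    unfolding I_def by (rule prod.Sigma) auto
  also have "\<dots> = (\<Prod>j<length xs. c j ^ snd (xs ! j))"
    using prod.reindex_bij_betw [OF g, of "\<lambda>j. c j ^ snd (xs ! j)"] by (simp add: case_prod_beta)
  finally show ?thesis
    using alpha_products_memI [OF a_A a_inj] by simp
qed

lemma F_alpha_alpha_of_memE: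
  assumes "S \<in> F_alpha (alpha_of xs)"
  obtains B where "\<And>j. j < length xs \<Longrightarrow> B j \<in> fst (xs ! j)"
    and "\<And>c. inj_on c {..<length xs} \<Longrightarrow> (\<And>j. j < length xs \<Longrightarrow> c j \<in> B j) \<Longrightarrow>
           (\<Prod>j<length xs. c j ^ snd (xs ! j)) \<in> S"
proof -
  let ?al = "alpha_of xs" and ?r = "remdups xs"
  let ?I = "SIGMA i:{..<length ?r}. {..<count_list xs (?r ! i)}"
  obtain A where A: "admissible ?al A" and S: "S = alpha_products ?al A"
    using assms unfolding F_alpha_eq by blast
  obtain g where g: "bij_betw g ?I {..<length xs}"
    and xs_g: "\<And>i l. i < length ?r \<Longrightarrow> l < count_list xs (?r ! i) \<Longrightarrow> xs ! g (i, l) = ?r ! i"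
    using remdups_occurrences_bij [of xs] by blast
  define B where "B j = A (fst (inv_into ?I g j))" for j
  have B_g: "B (g (i, l)) = A i" if "i < length ?r" "l < count_list xs (?r ! i)" for i l
    using bij_betw_inv_into_left [OF g] that by (simp add: B_def)
  show thesis
  proof
    fix j assume "j < length xs"
    then have "j \<in> g ` ?I"
      using bij_betw_imp_surj_on [OF g] by simp
    then obtain i l where il: "i < length ?r" "l < count_list xs (?r ! i)" and j: "j = g (i, l)"
      by blast
    have "A i \<in> fst (?al ! i)"
      using admissibleD(1) [OF A] il by simp
    then show "B j \<in> fst (xs ! j)"
      using B_g [OF il] xs_g [OF il] il j by (simp add: nth_alpha_of)
  next
    fix c assume c_inj: "inj_on c {..<length xs}" and c_B: "\<And>j. j < length xs \<Longrightarrow> c j \<in> B j"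
    have "c (g (i, l)) \<in> A i" if "i < length ?r" "l < count_list xs (?r ! i)" for i l
      using c_B [of "g (i, l)"] B_g [OF that] bij_betwE [OF g] that by simp
    then show "(\<Prod>j<length xs. c j ^ snd (xs ! j)) \<in> S"
      unfolding S using alpha_products_alpha_of_memI [OF g xs_g c_inj] by blast
  qed
qed

lemma F_alpha_alpha_of_subset:
  assumes x: "is_ultrafilter x" and T: "T \<in> x"
    and fst_xs: "\<And>j. j < length xs \<Longrightarrow> fst (xs ! j) = pushforward (\<lambda>a. c a j) T x"
    and inj: "\<And>a. a \<in> T \<Longrightarrow> inj_on (c a) {..<length xs}"
    and factor: "\<And>a. a \<in> T \<Longrightarrow> a = (\<Prod>j<length xs. c a j ^ snd (xs ! j))"
  shows "F_alpha (alpha_of xs) \<subseteq> x"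
proof
  fix S assume S: "S \<in> F_alpha (alpha_of xs)"
  obtain B where B: "\<And>j. j < length xs \<Longrightarrow> B j \<in> fst (xs ! j)"
    and prod_mem: "\<And>c. inj_on c {..<length xs} \<Longrightarrow> (\<And>j. j < length xs \<Longrightarrow> c j \<in> B j) \<Longrightarrow>
           (\<Prod>j<length xs. c j ^ snd (xs ! j)) \<in> S"
    using F_alpha_alpha_of_memE [OF S] by blast
  let ?T' = "T \<inter> (Npos \<inter> (\<Inter>j\<in>{..<length xs}. {a \<in> T. c a j \<in> B j}))"
  have "{a \<in> T. c a j \<in> B j} \<in> x" if "j < length xs" for j
    using B [OF that] fst_xs [OF that] by (simp add: mem_pushforward_iff)
  then have "?T' \<in> x"
    by (intro ultrafilter_Int [OF x T] ultrafilter_finite_Inter [OF x]) auto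
  moreover have "?T' \<subseteq> S"
  proof
    fix a assume "a \<in> ?T'"
    then have "a \<in> T" "\<And>j. j < length xs \<Longrightarrow> c a j \<in> B j"
      by auto
    then show "a \<in> S"
      using prod_mem [OF inj] factor by metis
  qed
  moreover have "S \<subseteq> Npos"
    using F_alpha_subset_L [OF S] L_subset_Npos by blast
  ultimately show "S \<in> x"
    by (rule ultrafilter_mono [OF x])
qed

definition factor_pairs :: "nat set set \<Rightarrow> nat set \<Rightarrow> nat list \<Rightarrow> (nat set set \<times> nat) list" where
  "factor_pairs x T s = map (\<lambda>j. (pushforward (\<lambda>a. prime_factor_list a ! j) T x, s ! j)) [0..<length s]"

lemma sigma_alpha_of_factor_pairs: "sigma (alpha_of (factor_pairs x T s)) = sum_list s"
  by (simp add: sigma_alpha_of factor_pairs_def comp_def map_nth)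

lemma valid_alpha_factor_pairs:
  assumes x: "is_ultrafilter x" and T: "T \<in> x"
    and T_s: "\<And>a. a \<in> T \<Longrightarrow> a \<noteq> 0 \<and> exponent_list a = s"
  shows "valid_alpha (alpha_of (factor_pairs x T s))"
proof (rule valid_alpha_of)
  fix p k assume "(p, k) \<in> set (factor_pairs x T s)"
  then obtain j where j: "j < length s" "p = pushforward (\<lambda>a. prime_factor_list a ! j) T x" "k = s ! j"
    by (auto simp: factor_pairs_def)
  have "prime (prime_factor_list a ! j)" if "a \<in> T" for a
  proof -
    have "length (prime_factor_list a) = length s"
      using T_s [OF that] length_exponent_list [of a] by simp
    then show ?thesis
      using prime_factor_list_prime j(1) by simp
  qed
  then have "(\<lambda>a. prime_factor_list a ! j) ` T \<subseteq> Primes"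
    by (auto simp: Primes_def)
  then have "p \<in> bar Primes"
    using pushforward_in_bar [OF x T _ Primes_subset_Npos] j(2) by simp
  moreover obtain a where "a \<in> T"
    using ultrafilter_nonempty [OF x T] by blast
  then have "k \<in> set (exponent_list a)"
    using T_s j by simp
  ultimately show "p \<in> bar Primes \<and> k \<ge> 1"
    using exponent_list_pos by blast
qed

lemma F_alpha_factor_pairs_subset:
  assumes x: "is_ultrafilter x" and T: "T \<in> x"
    and T_s: "\<And>a. a \<in> T \<Longrightarrow> a \<noteq> 0 \<and> exponent_list a = s"
  shows "F_alpha (alpha_of (factor_pairs x T s)) \<subseteq> x"
proof (rule F_alpha_alpha_of_subset [OF x T])
  show "fst (factor_pairs x T s ! j) = pushforward (\<lambda>a. prime_factor_list a ! j) T x"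
    if "j < length (factor_pairs x T s)" for j
    using that by (simp add: factor_pairs_def)
  show "inj_on ((!) (prime_factor_list a)) {..<length (factor_pairs x T s)}" if "a \<in> T" for a
    using T_s [OF that] length_exponent_list [of a]
    by (simp add: inj_on_nth distinct_prime_factor_list factor_pairs_def)
  show "a = (\<Prod>j<length (factor_pairs x T s). prime_factor_list a ! j ^ snd (factor_pairs x T s ! j))"
    if "a \<in> T" for a
    using prod_prime_factor_list [of a] T_s [OF that] length_exponent_list [of a]
    by (simp add: factor_pairs_def)
qed

lemma ex_valid_alpha_F_alpha_subset:
  assumes x: "is_ultrafilter x" and Lx: "L n \<in> x"
  shows "\<exists>al. valid_alpha al \<and> sigma al = n \<and> F_alpha al \<subseteq> x"
proof -
  obtain s where T: "{a \<in> L n. exponent_list a = s} \<in> x" (is "?T \<in> x")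
    using ultrafilter_finite_fiber [OF x Lx finite_exponent_lists] by blast
  have T_s: "a \<noteq> 0 \<and> exponent_list a = s" if "a \<in> ?T" for a
    using that by (simp add: L_eq_bigomega)
  obtain a where "a \<in> ?T"
    using ultrafilter_nonempty [OF x T] by blast
  then have "sum_list s = n"
    using sum_list_exponent_list [of a] by (simp add: L_eq_bigomega)
  then have "valid_alpha (alpha_of (factor_pairs x ?T s)) \<and> sigma (alpha_of (factor_pairs x ?T s)) = n
      \<and> F_alpha (alpha_of (factor_pairs x ?T s)) \<subseteq> x"
    using valid_alpha_factor_pairs [OF x T T_s] F_alpha_factor_pairs_subset [OF x T T_s]
    by (simp add: sigma_alpha_of_factor_pairs)
  then show ?thesis
    by blast
qed

theorem theorem2p7:
  fixes x :: "nat set set" and n :: nat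
  assumes "is_ultrafilter x" and "n \<ge> 1"
  shows "(\<exists>al. valid_alpha al \<and> sigma al = n \<and> F_alpha al \<subseteq> x) \<longleftrightarrow> x \<in> bar (L n)"
  using L_sigma_mem_if_F_alpha_subset [OF assms(1)] ex_valid_alpha_F_alpha_subset [OF assms(1)] assms(1)
  by (auto simp: bar_def)

end
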